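(* If $L\subseteq\mathbb{R}$ is a Luzin set (with the subspace topology), then the game $G_1(\mathcal{C}_\mathcal{O},\mathcal{C}_\mathcal{O})$ on $L$ is undetermined: neither Alice nor Bob has a winning strategy.
   Context: A Luzin set is an uncountable set $L$ of reals such that $L\cap M$ is countable for every meager set $M\subseteq\mathbb{R}$. $\mathcal{C}_\mathcal{O}$ is the collection of all covers of the space by clopen sets. Game $G_1(\mathcal{C}_\mathcal{O},\mathcal{C}_\mathcal{O})$: in each inning $n\in\omega$ Alice chooses a clopen cover $\mathcal{U}_n$ of the space, Bob chooses $U_n\in\mathcal{U}_n$; Bob wins iff $\{U_n:n\in\omega\}$ covers the space, Alice wins otherwise. A strategy is a function from the opponent's previous moves to a legal move; it is winning if every play following it is won by that player. *)

theory Defs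
  imports "HOL-Analysis.Analysis"
begin

definition nowhere_dense :: "real set \<Rightarrow> bool" where
  "nowhere_dense A \<longleftrightarrow> interior (closure A) = {}"

definition meager :: "real set \<Rightarrow> bool" where
  "meager M \<longleftrightarrow> (\<exists>F :: nat \<Rightarrow> real set. (\<forall>n. nowhere_dense (F n)) \<and> M \<subseteq> (\<Union>n. F n))"

definition luzin_set :: "real set \<Rightarrow> bool" where
  "luzin_set L \<longleftrightarrow> uncountable L \<and> (\<forall>M. meager M \<longrightarrow> countable (L \<inter> M))"

definition clopen_in :: "real set \<Rightarrow> real set \<Rightarrow> bool" where
  "clopen_in L U \<longleftrightarrow> openin (top_of_set L) U \<and> closedin (top_of_set L) U"

definition clopen_cover :: "real set \<Rightarrow> real set set \<Rightarrow> bool" where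
  "clopen_cover L \<U> \<longleftrightarrow> (\<forall>U\<in>\<U>. clopen_in L U) \<and> \<Union>\<U> = L"

definition alice_strategy :: "real set \<Rightarrow> (real set list \<Rightarrow> real set set) \<Rightarrow> bool" where
  "alice_strategy L \<sigma> \<longleftrightarrow> (\<forall>bs. clopen_cover L (\<sigma> bs))"

text \<open>A play follows Alice's strategy if in inning n Alice plays sigma applied to Bob's moves
  U 0, ..., U (n-1) and Bob picks U n from it. Alice wins iff Bob's picks fail to cover L.\<close>
definition alice_winning :: "real set \<Rightarrow> (real set list \<Rightarrow> real set set) \<Rightarrow> bool" where
  "alice_winning L \<sigma> \<longleftrightarrow> alice_strategy L \<sigma> \<and>
     (\<forall>U :: nat \<Rightarrow> real set. (\<forall>n. U n \<in> \<sigma> (map U [0..<n])) \<longrightarrow> (\<Union>n. U n) \<noteq> L)"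

text \<open>Bob's strategy: from Alice's moves so far (nonempty list of clopen covers, the last
  one being the current cover) to an element of the current cover.\<close>
definition bob_strategy :: "real set \<Rightarrow> (real set set list \<Rightarrow> real set) \<Rightarrow> bool" where
  "bob_strategy L \<tau> \<longleftrightarrow>
     (\<forall>cs. cs \<noteq> [] \<and> (\<forall>\<U>\<in>set cs. clopen_cover L \<U>) \<longrightarrow> \<tau> cs \<in> last cs)"

definition bob_winning :: "real set \<Rightarrow> (real set set list \<Rightarrow> real set) \<Rightarrow> bool" where
  "bob_winning L \<tau> \<longleftrightarrow> bob_strategy L \<tau> \<and>
     (\<forall>\<C> :: nat \<Rightarrow> real set set. (\<forall>n. clopen_cover L (\<C> n)) \<longrightarrow>
        (\<Union>n. \<tau> (map \<C> [0..<Suc n])) = L)"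

end

theory Submission
  imports Defs
begin

text \<open>A Luzin set contains no interval, since every interval contains an uncountable nowhere
  dense set. Hence cutting L at a point c \<notin> L gives a clopen cover by two halves, with cut
  points available in a countable set C dense in the line. Against a strategy of Bob, after each
  finite history of cuts at most one point lies in his reply to every next cut from C; these
  countably many points do not exhaust L, and Alice dodges a point outside them forever.

  Against a strategy \<sigma> of Alice, fix a sequence d running infinitely often through a countable
  dense subset of L and consider the finitely branching tree of plays in which Bob covers d j
  at inning 2j and a point of a finite set G j at inning 2j+1. The points covered by every
  node of some level form an open set V containing all d j, so L - V is countable: an open
  set whose trace is dense in L leaves only a nowhere dense, hence countable, part of L.
  Likewise only countably many points of L cannot be covered below a given node; feeding them
  into the sets G j by a closing-off construction makes every point of L coverable below every
  node. Bob then descends the tree, detouring at step i to cover the i-th point of L - V, and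
  his moves cover L.\<close>

section \<open>Luzin sets\<close>

lemma nowhere_dense_imp_meager: "nowhere_dense A \<Longrightarrow> meager A"
  unfolding meager_def by (intro exI[of _ "\<lambda>_. A"]) auto

lemma exists_uncountable_nowhere_dense:
  fixes a b :: real
  assumes "a < b"
  obtains F where "F \<subseteq> {a<..<b}" "nowhere_dense F" "uncountable F"
proof -
  have Q: "\<rat> \<in> null_sets lebesgue"
    by (intro null_sets_completionI countable_imp_null_set_lborel countable_rat)
  obtain T :: "real set" where T: "open T" "\<rat> \<subseteq> T" "T - \<rat> \<in> lmeasurable"
      "emeasure lebesgue (T - \<rat>) < ennreal (b - a)"
    using sets_lebesgue_outer_open[OF null_setsD2[OF Q]] assms by (metis diff_gt_0_iff_gt)
  define F where "F = {a<..<b} - T"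
  have "interior (closure F) \<subseteq> interior (- T)"
    using T(1) by (intro interior_mono closure_minimal) (auto simp: F_def)
  also have "\<dots> = {}"
    using closure_mono[OF T(2)] by (auto simp: interior_complement Rats_closure_real)
  finally have "nowhere_dense F" by (simp add: nowhere_dense_def)
  moreover have "uncountable F"
  proof
    assume "countable F"
    then have null: "\<rat> \<union> F \<in> null_sets lebesgue"
      using Q by (intro null_sets.Un[OF Q] null_sets_completionI countable_imp_null_set_lborel)
    have meas: "T - \<rat> \<in> sets lebesgue"
      using T(3) by (rule fmeasurableD)
    have "ennreal (b - a) = emeasure lebesgue {a<..<b}"
      using assms by simp
    also have "\<dots> \<le> emeasure lebesgue ((T - \<rat>) \<union> (\<rat> \<union> F))"
      by (rule emeasure_mono) (use meas null in \<open>auto simp: F_def\<close>)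
    also have "\<dots> = emeasure lebesgue (T - \<rat>)"
      using meas null by (rule emeasure_Un_null_set)
    finally show False using T(4) by simp
  qed
  ultimately show thesis using that by (auto simp: F_def)
qed

lemma luzin_set_countable_Int_nowhere_dense:
  "luzin_set L \<Longrightarrow> nowhere_dense A \<Longrightarrow> countable (L \<inter> A)"
  unfolding luzin_set_def using nowhere_dense_imp_meager by blast

lemma luzin_set_gap:
  assumes "luzin_set L" "a < b"
  obtains c where "a < c" "c < b" "c \<notin> L"
proof -
  obtain F where F: "F \<subseteq> {a<..<b}" "nowhere_dense F" "uncountable F"
    using exists_uncountable_nowhere_dense[OF assms(2)] .
  have "\<not> F \<subseteq> L"
    using luzin_set_countable_Int_nowhere_dense[OF assms(1) F(2)] F(3) by (metis inf.absorb_iff2)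
  then obtain c where "c \<in> F" "c \<notin> L"
    by blast
  then show thesis
    using F(1) that by (meson greaterThanLessThan_iff subsetD)
qed

lemma luzin_set_countable_diff_open:
  assumes "luzin_set L" "open U" "L \<subseteq> closure (L \<inter> U)"
  shows "countable (L - U)"
proof -
  have "interior (closure (L - U)) = {}"
  proof -
    have "interior (closure (L - U)) \<inter> (L - U) = {}"
    proof -
      have "interior (closure (L - U)) \<inter> (L \<inter> U) = {}"
        using assms(2) closure_minimal[of "L - U" "- U"] interior_subset[of "closure (L - U)"]
        by (auto simp: closed_Compl)
      then have "interior (closure (L - U)) \<inter> closure (L \<inter> U) = {}"
        by (simp add: open_Int_closure_eq_empty)
      then show ?thesis
        using assms(3) by blast
    qed
    then show ?thesis
      using open_Int_closure_eq_empty[of "interior (closure (L - U))" "L - U"] interior_subset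
      by blast
  qed
  then show ?thesis
    using luzin_set_countable_Int_nowhere_dense[OF assms(1)] unfolding nowhere_dense_def
    by (metis Int_Diff inf.idem)
qed

section \<open>Bob has no winning strategy\<close>

definition halves :: "real set \<Rightarrow> real \<Rightarrow> real set set" where
  "halves L c = {L \<inter> {..<c}, L \<inter> {c<..}}"

lemma clopen_cover_halves:
  assumes "c \<notin> L"
  shows "clopen_cover L (halves L c)"
proof -
  have "L \<inter> {..<c} = L \<inter> {..c}" "L \<inter> {c<..} = L \<inter> {c..}"
    using assms by (auto simp: less_le)
  then have "clopen_in L (L \<inter> {..<c})" "clopen_in L (L \<inter> {c<..})"
    unfolding clopen_in_def by (metis closedin_closed_Int openin_open_Int closed_atMost open_lessThan,
        metis closedin_closed_Int openin_open_Int closed_atLeast open_greaterThan)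
  moreover have "\<Union>(halves L c) = L"
    using assms by (auto simp: halves_def) (metis linorder_neqE_linordered_idom)
  ultimately show ?thesis
    by (auto simp: clopen_cover_def halves_def)
qed

lemma sequence_of_histories:
  assumes "\<And>h. set h \<subseteq> A \<Longrightarrow> \<exists>a\<in>A. P h a"
  obtains f where "\<And>n. f n \<in> A" "\<And>n. P (map f [0..<n]) (f n)"
proof -
  define pick where "pick h = (SOME a. a \<in> A \<and> P h a)" for h
  have pick: "pick h \<in> A \<and> P h (pick h)" if "set h \<subseteq> A" for h
    unfolding pick_def using someI_ex[of "\<lambda>a. a \<in> A \<and> P h a"] assms[OF that] by blast
  define hist where "hist = rec_nat [] (\<lambda>_ h. h @ [pick h])"
  have hist: "set (hist n) \<subseteq> A \<and> hist n = map (\<lambda>i. pick (hist i)) [0..<n]" for n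
  proof (induction n)
    case 0
    then show ?case by (simp add: hist_def)
  next
    case (Suc n)
    then have A: "set (hist n) \<subseteq> A" and eq: "map (\<lambda>i. pick (hist i)) [0..<n] = hist n"
      by auto
    have "hist (Suc n) = hist n @ [pick (hist n)]"
      by (simp add: hist_def)
    then show ?case
      using A pick[OF A] by (simp add: eq)
  qed
  show thesis
  proof (rule that)
    show "pick (hist n) \<in> A" "P (map (\<lambda>i. pick (hist i)) [0..<n]) (pick (hist n))" for n
      using pick[of "hist n"] hist[of n] by auto
  qed
qed

lemma countable_dense_avoiding:
  fixes L :: "real set"
  assumes "\<And>a b. a < b \<Longrightarrow> \<exists>c. a < c \<and> c < b \<and> c \<notin> L"
  obtains C where "countable C" "C \<inter> L = {}" "\<And>a b. a < b \<Longrightarrow> \<exists>c\<in>C. a < c \<and> c < b"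
proof
  define gap where "gap p q = (SOME c. p < c \<and> c < q \<and> c \<notin> L)" for p q :: real
  have gap: "p < gap p q \<and> gap p q < q \<and> gap p q \<notin> L" if "p < q" for p q
    unfolding gap_def using someI_ex[OF assms[OF that]] .
  define C where "C = (\<lambda>(p, q). gap p q) ` {(p, q). p \<in> \<rat> \<and> q \<in> \<rat> \<and> p < q}"
  show "countable C"
    unfolding C_def
    by (rule countable_image, rule countable_subset[of _ "\<rat> \<times> \<rat>"]) (auto simp: countable_rat)
  show "C \<inter> L = {}"
    using gap by (auto simp: C_def)
  show "\<exists>c\<in>C. a < c \<and> c < b" if "a < b" for a b
  proof -
    obtain p where p: "p \<in> \<rat>" "a < p" "p < b"
      using Rats_dense_in_real[OF \<open>a < b\<close>] by blast
    obtain q where q: "q \<in> \<rat>" "p < q" "q < b"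
      using Rats_dense_in_real[OF \<open>p < b\<close>] by blast
    have "gap p q \<in> C"
      using p q by (auto simp: C_def)
    then show ?thesis
      using gap[OF \<open>p < q\<close>] p q by (intro bexI[of _ "gap p q"]) auto
  qed
qed

lemma bob_reply_separates:
  assumes "bob_strategy L \<tau>" "\<forall>\<U>\<in>set cs. clopen_cover L \<U>" "c \<notin> L" "u < c" "c < v"
  shows "\<not> (u \<in> \<tau> (cs @ [halves L c]) \<and> v \<in> \<tau> (cs @ [halves L c]))"
proof -
  have "\<forall>\<U>\<in>set (cs @ [halves L c]). clopen_cover L \<U>"
    using assms(2) clopen_cover_halves[OF assms(3)] by simp
  then have "\<tau> (cs @ [halves L c]) \<in> last (cs @ [halves L c])"
    using assms(1) unfolding bob_strategy_def by (meson snoc_eq_iff_butlast)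
  then have "\<tau> (cs @ [halves L c]) \<subseteq> {..<c} \<or> \<tau> (cs @ [halves L c]) \<subseteq> {c<..}"
    by (auto simp: halves_def)
  then show ?thesis
    using assms(4,5) by fastforce
qed

lemma bob_strategy_escapable:
  assumes \<tau>: "bob_strategy L \<tau>" and "uncountable L"
    and C: "countable C" "C \<inter> L = {}" "\<And>a b. a < b \<Longrightarrow> \<exists>c\<in>C. a < c \<and> c < b"
  obtains x where "x \<in> L" "\<And>h. set h \<subseteq> C \<Longrightarrow> \<exists>c\<in>C. x \<notin> \<tau> (map (halves L) h @ [halves L c])"
proof -
  have covers: "\<forall>\<U>\<in>set (map (halves L) h). clopen_cover L \<U>" if "set h \<subseteq> C" for h
    using that C(2) clopen_cover_halves by auto
  text \<open>After a history h, at most one point lies in Bob's reply to every next cut from C: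
    two such points are separated by some cut.\<close>
  define stubborn where
    "stubborn h = {x \<in> L. \<forall>c\<in>C. x \<in> \<tau> (map (halves L) h @ [halves L c])}" for h
  have no_pair: False if "set h \<subseteq> C" "u < v" "u \<in> stubborn h" "v \<in> stubborn h" for h u v
  proof -
    obtain c where "c \<in> C" "u < c" "c < v"
      using C(3)[OF \<open>u < v\<close>] by blast
    then show False
      using bob_reply_separates[OF \<tau> covers[OF \<open>set h \<subseteq> C\<close>], of c u v] C(2) that(3,4)
      by (auto simp: stubborn_def)
  qed
  have "stubborn h \<subseteq> {u}" if "set h \<subseteq> C" "u \<in> stubborn h" for h u
    using no_pair[OF that(1)] that(2) by (metis linorder_neqE_linordered_idom singletonI subsetI)
  then have "countable (stubborn h)" if "set h \<subseteq> C" for h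
    using that by (metis countable_empty countable_finite countable_subset finite.intros subsetI)
  then have "countable (\<Union>h\<in>lists C. stubborn h)"
    using C(1) by (intro countable_UN countable_lists) (auto simp: in_lists_conv_set)
  then have "\<not> L \<subseteq> (\<Union>h\<in>lists C. stubborn h)"
    using assms(2) countable_subset by blast
  then obtain x where x: "x \<in> L" "x \<notin> (\<Union>h\<in>lists C. stubborn h)"
    by blast
  moreover have "\<exists>c\<in>C. x \<notin> \<tau> (map (halves L) h @ [halves L c])" if "set h \<subseteq> C" for h
    using x that by (auto simp: stubborn_def in_lists_conv_set)
  ultimately show thesis
    using that by blast
qed

lemma bob_not_winning:
  assumes "uncountable L" and gaps: "\<And>a b. a < b \<Longrightarrow> \<exists>c. a < c \<and> c < b \<and> c \<notin> L"
  shows "\<not> bob_winning L \<tau>"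
proof
  assume "bob_winning L \<tau>"
  then have \<tau>: "bob_strategy L \<tau>"
    and wins: "\<And>\<C>. (\<forall>n. clopen_cover L (\<C> n)) \<Longrightarrow> (\<Union>n. \<tau> (map \<C> [0..<Suc n])) = L"
    unfolding bob_winning_def by auto
  obtain C where C: "countable C" "C \<inter> L = {}" "\<And>a b. a < b \<Longrightarrow> \<exists>c\<in>C. a < c \<and> c < b"
    using countable_dense_avoiding[OF gaps] by blast
  obtain x where x: "x \<in> L"
    "\<And>h. set h \<subseteq> C \<Longrightarrow> \<exists>c\<in>C. x \<notin> \<tau> (map (halves L) h @ [halves L c])"
    using bob_strategy_escapable[OF \<tau> assms(1) C] by blast
  then obtain f where f: "\<And>n. f n \<in> C"
    "\<And>n. x \<notin> \<tau> (map (halves L) (map f [0..<n]) @ [halves L (f n)])"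
    using sequence_of_histories[of C "\<lambda>h c. x \<notin> \<tau> (map (halves L) h @ [halves L c])"] by blast
  have "\<forall>n. clopen_cover L (halves L (f n))"
    using f(1) C(2) clopen_cover_halves by blast
  then have "(\<Union>n. \<tau> (map (halves L \<circ> f) [0..<Suc n])) = L"
    using wins[of "halves L \<circ> f"] by simp
  then show False
    using f(2) x(1) by (auto simp del: upt_Suc simp: upt_Suc_append)
qed

section \<open>Alice has no winning strategy\<close>

definition open_lift :: "'a::topological_space set \<Rightarrow> 'a set \<Rightarrow> 'a set" where
  "open_lift S U = (SOME W. open W \<and> U = S \<inter> W)"

lemma open_lift:
  assumes "openin (top_of_set S) U"
  shows "open (open_lift S U)" "U = S \<inter> open_lift S U"
proof -
  have "\<exists>W. open W \<and> U = S \<inter> W"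
    using assms by (simp add: openin_open)
  then have "open (open_lift S U) \<and> U = S \<inter> open_lift S U"
    unfolding open_lift_def by (rule someI_ex)
  then show "open (open_lift S U)" "U = S \<inter> open_lift S U"
    by auto
qed

lemma dense_sequence:
  fixes S :: "'a::{metric_space, second_countable_topology} set"
  assumes "S \<noteq> {}"
  obtains d :: "nat \<Rightarrow> 'a" where "range d \<subseteq> S" "\<And>m. S \<subseteq> closure (d ` {m..})"
proof -
  obtain T where T: "countable T" "T \<subseteq> S" "S \<subseteq> closure T"
    using separable by blast
  have "T \<noteq> {}"
    using T(3) assms by auto
  text \<open>Every point of T is visited infinitely often.\<close>
  define d where "d j = from_nat_into T (fst (prod_decode j))" for j
  show thesis
  proof
    show "range d \<subseteq> S"
      using from_nat_into[OF \<open>T \<noteq> {}\<close>] T(2) by (auto simp: d_def)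
    have "T \<subseteq> d ` {m..}" for m
    proof
      fix x assume "x \<in> T"
      then obtain k where "from_nat_into T k = x"
        using from_nat_into_surj[OF T(1)] by blast
      then have "d (prod_encode (k, m)) = x"
        by (simp add: d_def)
      then show "x \<in> d ` {m..}"
        using le_prod_encode_2[of m k] by force
    qed
    then show "S \<subseteq> closure (d ` {m..})" for m
      using T(3) closure_mono by blast
  qed
qed

lemma prefix_chain_limit:
  fixes hs :: "nat \<Rightarrow> 'a list"
  assumes prefix: "\<And>i. take (length (hs i)) (hs (Suc i)) = hs i"
    and longer: "\<And>i. length (hs i) < length (hs (Suc i))"
  obtains b where "\<And>i. hs i = map b [0..<length (hs i)]" "\<And>n. take n (hs n) = map b [0..<n]"
proof -
  have chain: "take (length (hs i)) (hs j) = hs i" if "i \<le> j" for i j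
    using that
  proof (induction j rule: dec_induct)
    case (step j)
    have "length (hs i) \<le> length (hs j)"
      using step.IH by (metis length_take min.bounded_iff nle_le)
    then show ?case
      using step.IH prefix[of j] by (metis min.absorb1 take_take)
  qed simp
  have length_ge: "i \<le> length (hs i)" for i
    by (induction i) (auto intro: Suc_leI order.strict_trans1 longer)
  define b where "b k = hs (Suc k) ! k" for k
  have hs_b: "hs i = map b [0..<length (hs i)]" for i
  proof (rule nth_equalityI)
    fix k assume "k < length (hs i)"
    let ?j = "max i (Suc k)"
    have "hs i ! k = hs ?j ! k"
      using chain[of i ?j] \<open>k < length (hs i)\<close> by (metis max.cobounded1 nth_take)
    also have "\<dots> = b k"
      using chain[of "Suc k" ?j] length_ge[of "Suc k"] unfolding b_def
      by (metis Suc_le_lessD max.cobounded2 nth_take)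
    finally show "hs i ! k = map b [0..<length (hs i)] ! k"
      using \<open>k < length (hs i)\<close> by simp
  qed simp
  moreover have "take n (hs n) = map b [0..<n]" for n
    using hs_b[of n] length_ge[of n] by (metis take_map take_upt add_0 min.absorb1)
  ultimately show thesis
    using that by blast
qed

locale alice_strategy_on_luzin_set =
  fixes L :: "real set" and \<sigma> :: "real set list \<Rightarrow> real set set" and d :: "nat \<Rightarrow> real"
  assumes luzin: "luzin_set L"
    and strategy: "alice_strategy L \<sigma>"
    and d_in: "range d \<subseteq> L"
    and d_dense: "\<And>m. L \<subseteq> closure (d ` {m..})"
begin

lemma d_mem: "d j \<in> L"
  using d_in by blast

lemma move_subset: "U \<in> \<sigma> h \<Longrightarrow> U \<subseteq> L"
  using strategy unfolding alice_strategy_def clopen_cover_def by blast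

lemma move_lift:
  assumes "U \<in> \<sigma> h"
  shows "open (open_lift L U)" "U = L \<inter> open_lift L U"
  using strategy assms open_lift unfolding alice_strategy_def clopen_cover_def clopen_in_def
  by blast+

definition reply :: "real set list \<Rightarrow> real \<Rightarrow> real set" where
  "reply h x = (SOME U. U \<in> \<sigma> h \<and> x \<in> U)"

lemma reply:
  assumes "x \<in> L"
  shows "reply h x \<in> \<sigma> h" "x \<in> reply h x"
proof -
  have "\<exists>U. U \<in> \<sigma> h \<and> x \<in> U"
    using strategy assms unfolding alice_strategy_def clopen_cover_def by blast
  then have "reply h x \<in> \<sigma> h \<and> x \<in> reply h x"
    unfolding reply_def by (rule someI_ex)
  then show "reply h x \<in> \<sigma> h" "x \<in> reply h x"
    by auto
qed

text \<open>Plays against \<sigma> in which Bob covers d j at inning 2j and a point of G j at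
  inning 2j+1. A history is recorded as the list of Bob's moves.\<close>

definition options :: "(nat \<Rightarrow> real set) \<Rightarrow> nat \<Rightarrow> real set" where
  "options G k = (if even k then {d (k div 2)} else G (k div 2))"

definition tree :: "(nat \<Rightarrow> real set) \<Rightarrow> real set list set" where
  "tree G = {h. \<forall>i<length h. \<exists>x\<in>options G i. h ! i = reply (take i h) x}"

definition admissible :: "(nat \<Rightarrow> real set) \<Rightarrow> bool" where
  "admissible G \<longleftrightarrow> (\<forall>j. finite (G j) \<and> G j \<noteq> {} \<and> G j \<subseteq> L)"

lemma options_admissible:
  assumes "admissible G"
  shows "finite (options G k)" "options G k \<noteq> {}" "options G k \<subseteq> L"
  using assms d_in by (auto simp: options_def admissible_def)

lemma tree_take: "h \<in> tree G \<Longrightarrow> take n h \<in> tree G"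
  by (auto simp: tree_def min_less_iff_conj take_take min_absorb1)

lemma tree_snoc:
  assumes "h \<in> tree G" "x \<in> options G (length h)"
  shows "h @ [reply h x] \<in> tree G"
  using assms by (auto simp: tree_def nth_append less_Suc_eq)

lemma tree_move:
  assumes "admissible G" "h \<in> tree G" "i < length h"
  shows "h ! i \<in> \<sigma> (take i h)"
proof -
  obtain x where "x \<in> options G i" "h ! i = reply (take i h) x"
    using assms(2,3) by (auto simp: tree_def)
  then show ?thesis
    using reply(1) options_admissible(3)[OF assms(1)] by (metis subsetD)
qed

lemma tree_extend:
  assumes "admissible G" "h \<in> tree G" "length h \<le> k"
  shows "\<exists>h'\<in>tree G. length h' = k \<and> take (length h) h' = h"
  using assms(3)
proof (induction k rule: dec_induct)
  case base
  then show ?case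
    using assms(2) by auto
next
  case (step k)
  then obtain h' where h': "h' \<in> tree G" "length h' = k" "take (length h) h' = h"
    by blast
  obtain x where "x \<in> options G k"
    using options_admissible(2)[OF assms(1)] by blast
  then have "h' @ [reply h' x] \<in> tree G"
    using tree_snoc h' by simp
  then show ?case
    using h' step.hyps by (intro bexI[of _ "h' @ [reply h' x]"]) auto
qed

lemma finite_tree_level:
  assumes "admissible G"
  shows "finite {h \<in> tree G. length h = k}"
proof (induction k)
  case 0
  then show ?case
    by (simp add: length_0_conv)
next
  case (Suc k)
  have "{h \<in> tree G. length h = Suc k} \<subseteq>
      (\<lambda>(h, x). h @ [reply h x]) ` ({h \<in> tree G. length h = k} \<times> options G k)"
  proof
    fix h assume h: "h \<in> {h \<in> tree G. length h = Suc k}"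
    then obtain x where "x \<in> options G k" "h ! k = reply (take k h) x"
      by (auto simp: tree_def)
    moreover have "h = take k h @ [h ! k]"
      using h by (simp add: take_Suc_conv_app_nth[symmetric])
    moreover have "take k h \<in> tree G"
      using h tree_take by blast
    ultimately show "h \<in> (\<lambda>(h, x). h @ [reply h x]) ` ({h \<in> tree G. length h = k} \<times> options G k)"
      using h by (intro image_eqI[of _ _ "(take k h, x)"]) auto
  qed
  then show ?case
    using Suc options_admissible(1)[OF assms] finite_subset by blast
qed

lemma countable_tree:
  assumes "admissible G"
  shows "countable (tree G)"
proof -
  have "tree G = (\<Union>k. {h \<in> tree G. length h = k})"
    by blast
  then show ?thesis
    using countable_UN[of UNIV "\<lambda>k. {h \<in> tree G. length h = k}"]
      countable_finite[OF finite_tree_level[OF assms]] by simp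
qed

lemma tree_mono: "(\<And>j. G j \<subseteq> G' j) \<Longrightarrow> tree G \<subseteq> tree G'"
  unfolding tree_def options_def by (fastforce split: if_splits)

lemma tree_cong:
  assumes "\<And>j. j < k \<Longrightarrow> G j = G' j" "length h \<le> k"
  shows "h \<in> tree G \<longleftrightarrow> h \<in> tree G'"
proof -
  have "options G i = options G' i" if "i < length h" for i
    using assms that by (simp add: options_def)
  then show ?thesis
    by (simp add: tree_def)
qed

definition extensions :: "(nat \<Rightarrow> real set) \<Rightarrow> real set list \<Rightarrow> real set list set" where
  "extensions G h = {h' \<in> tree G. length h < length h' \<and> take (length h) h' = h}"

definition reachable :: "(nat \<Rightarrow> real set) \<Rightarrow> real set list \<Rightarrow> real set" where
  "reachable G h = (\<Union>h'\<in>extensions G h. open_lift L (last h'))"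

lemma extension_last_move:
  assumes "admissible G" "h' \<in> extensions G h"
  shows "last h' \<in> \<sigma> (butlast h')"
proof -
  have "h' \<in> tree G" "length h' - 1 < length h'"
    using assms(2) by (auto simp: extensions_def)
  then show ?thesis
    using tree_move[OF assms(1)] by (metis butlast_conv_take last_conv_nth list.size(3) not_less0)
qed

lemma open_reachable: "admissible G \<Longrightarrow> open (reachable G h)"
  unfolding reachable_def using move_lift(1)[OF extension_last_move] by blast

lemma mem_reachable_iff:
  assumes "admissible G" "x \<in> L"
  shows "x \<in> reachable G h \<longleftrightarrow> (\<exists>h'\<in>extensions G h. x \<in> last h')"
  unfolding reachable_def using move_lift(2)[OF extension_last_move[OF assms(1)]] assms(2) by blast

lemma options_reached:
  assumes "admissible G" "h \<in> tree G" "length h \<le> k" "x \<in> options G k"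
  shows "\<exists>h'\<in>extensions G h. x \<in> last h'"
proof -
  obtain h' where h': "h' \<in> tree G" "length h' = k" "take (length h) h' = h"
    using tree_extend[OF assms(1-3)] by blast
  have "x \<in> L"
    using options_admissible(3)[OF assms(1)] assms(4) by blast
  have "h' @ [reply h' x] \<in> extensions G h"
    using tree_snoc[of h' G x] h' assms(3,4) by (auto simp: extensions_def)
  then show ?thesis
    using reply(2)[OF \<open>x \<in> L\<close>] by (intro bexI[of _ "h' @ [reply h' x]"]) simp_all
qed

lemma reachable_mono:
  assumes "\<And>j. G j \<subseteq> G' j"
  shows "reachable G h \<subseteq> reachable G' h"
proof -
  have "tree G \<subseteq> tree G'"
    using assms by (rule tree_mono)
  then have "extensions G h \<subseteq> extensions G' h"
    unfolding extensions_def by auto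
  then show ?thesis
    unfolding reachable_def by auto
qed

lemma countable_diff_reachable:
  assumes "admissible G" "h \<in> tree G"
  shows "countable (L - reachable G h)"
proof -
  have "d j \<in> reachable G h" if "length h \<le> j" for j
  proof -
    have "d j \<in> options G (2 * j)"
      by (simp add: options_def)
    then show ?thesis
      using options_reached[OF assms, of "2 * j"] that mem_reachable_iff[OF assms(1) d_mem] by simp
  qed
  then have "d ` {length h..} \<subseteq> L \<inter> reachable G h"
    using d_in by auto
  then have "L \<subseteq> closure (L \<inter> reachable G h)"
    using d_dense closure_mono by blast
  then show ?thesis
    using luzin_set_countable_diff_open[OF luzin open_reachable[OF assms(1)]] by blast
qed

definition unreachable :: "(nat \<Rightarrow> real set) \<Rightarrow> real set" where
  "unreachable G = (\<Union>h\<in>tree G. L - reachable G h)"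

lemma countable_unreachable: "admissible G \<Longrightarrow> countable (unreachable G)"
  unfolding unreachable_def using countable_tree countable_diff_reachable by blast

text \<open>Stage n+1 adds the first j+1 unreachable points of stage n to every G j with j \<ge> n.
  So G j is frozen from stage j+1 on, and the limit agrees with stage k below k. The point
  d 0 is inserted only because from_nat_into is junk on the empty set.\<close>

definition stage :: "nat \<Rightarrow> nat \<Rightarrow> real set" where
  "stage = rec_nat (\<lambda>_. {d 0}) (\<lambda>n G j. if n \<le> j
      then G j \<union> from_nat_into (insert (d 0) (unreachable G)) ` {..j} else G j)"

definition limit :: "nat \<Rightarrow> real set" where
  "limit j = stage (Suc j) j"

lemma stage_0: "stage 0 j = {d 0}"
  by (simp add: stage_def)

lemma stage_Suc: "stage (Suc n) j = (if n \<le> j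
    then stage n j \<union> from_nat_into (insert (d 0) (unreachable (stage n))) ` {..j} else stage n j)"
  by (simp add: stage_def)

lemma admissible_stage: "admissible (stage n)"
proof (induction n)
  case 0
  then show ?case
    using d_in by (auto simp: admissible_def stage_0)
next
  case (Suc n)
  have "from_nat_into (insert (d 0) (unreachable (stage n))) i \<in> L" for i
    using from_nat_into[of "insert (d 0) (unreachable (stage n))" i] d_in
    by (auto simp: unreachable_def)
  then show ?case
    using Suc by (auto simp: admissible_def stage_Suc)
qed

lemma stage_mono: "n \<le> n' \<Longrightarrow> stage n j \<subseteq> stage n' j"
  by (induction n' rule: dec_induct) (auto simp: stage_Suc)

lemma stage_frozen:
  assumes "j < n"
  shows "stage n j = limit j"
proof -
  have "Suc j \<le> n"
    using assms by simp
  then show ?thesis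
    unfolding limit_def by (induction n rule: dec_induct) (auto simp: stage_Suc)
qed

lemma admissible_limit: "admissible limit"
  using admissible_stage unfolding admissible_def limit_def by blast

lemma stage_subset_limit: "stage n j \<subseteq> limit j"
  using stage_mono[of n "Suc j" j] stage_frozen[of j n] by (cases "n \<le> Suc j") (auto simp: limit_def)

lemma reachable_limit:
  assumes "h \<in> tree limit"
  shows "L \<subseteq> reachable limit h"
proof
  fix x assume "x \<in> L"
  let ?k = "length h"
  have h: "h \<in> tree (stage ?k)"
    using assms tree_cong[of ?k "stage ?k" limit h] stage_frozen by simp
  show "x \<in> reachable limit h"
  proof (cases "x \<in> reachable (stage ?k) h")
    case True
    then show ?thesis
      using reachable_mono[of "stage ?k" limit h] stage_subset_limit by blast
  next
    case False
    then have mem: "x \<in> insert (d 0) (unreachable (stage ?k))"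
      using h \<open>x \<in> L\<close> by (auto simp: unreachable_def)
    have "countable (insert (d 0) (unreachable (stage ?k)))"
      using countable_unreachable[OF admissible_stage] by simp
    then obtain i where i: "from_nat_into (insert (d 0) (unreachable (stage ?k))) i = x"
      using from_nat_into_surj[OF _ mem] by blast
    then have "x \<in> from_nat_into (insert (d 0) (unreachable (stage ?k))) ` {..?k + i}"
      by (intro image_eqI[of _ _ i]) simp_all
    then have "x \<in> stage (Suc ?k) (?k + i)"
      by (simp add: stage_Suc)
    moreover have "options limit (Suc (2 * (?k + i))) = limit (?k + i)"
      by (simp add: options_def)
    ultimately have "x \<in> options limit (Suc (2 * (?k + i)))"
      using stage_subset_limit by blast
    then show ?thesis
      using options_reached[OF admissible_limit assms, of "Suc (2 * (?k + i))"]
        mem_reachable_iff[OF admissible_limit \<open>x \<in> L\<close>] by simp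
  qed
qed

definition surely_covered :: "real set" where
  "surely_covered = (\<Union>m. \<Inter>h\<in>{h \<in> tree limit. length h = m}. \<Union>i<m. open_lift L (h ! i))"

lemma open_surely_covered: "open surely_covered"
proof -
  have "open (\<Union>i<m. open_lift L (h ! i))" if "h \<in> tree limit" "length h = m" for h m
  proof -
    have "open (open_lift L (h ! i))" if "i < m" for i
      using move_lift(1)[OF tree_move[OF admissible_limit \<open>h \<in> tree limit\<close>]]
        \<open>length h = m\<close> that by simp
    then show ?thesis
      by blast
  qed
  then have "open (\<Inter>h\<in>{h \<in> tree limit. length h = m}. \<Union>i<m. open_lift L (h ! i))" for m
    using finite_tree_level[OF admissible_limit] by (intro open_INT) auto
  then show ?thesis
    unfolding surely_covered_def by blast
qed

lemma d_surely_covered: "d j \<in> surely_covered"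
proof -
  have "d j \<in> (\<Union>i<Suc (2 * j). open_lift L (h ! i))"
    if "h \<in> tree limit" "length h = Suc (2 * j)" for h
  proof -
    have "h ! (2 * j) = reply (take (2 * j) h) (d j)"
      using that by (auto simp: tree_def options_def)
    then have "d j \<in> h ! (2 * j)"
      using reply(2)[OF d_mem] by simp
    moreover have "h ! (2 * j) \<in> \<sigma> (take (2 * j) h)"
      using tree_move[OF admissible_limit that(1)] that(2) by simp
    ultimately show ?thesis
      using move_lift(2) by blast
  qed
  then show ?thesis
    unfolding surely_covered_def by blast
qed

lemma countable_diff_surely_covered: "countable (L - surely_covered)"
proof -
  have "d ` {0..} \<subseteq> L \<inter> surely_covered"
    using d_mem d_surely_covered by blast
  then have "L \<subseteq> closure (L \<inter> surely_covered)"
    using d_dense[of 0] closure_mono by blast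
  then show ?thesis
    by (rule luzin_set_countable_diff_open[OF luzin open_surely_covered])
qed

lemma descent:
  assumes "\<And>h i. h \<in> tree limit \<Longrightarrow> \<exists>h'\<in>extensions limit h. y i \<in> last h'"
  obtains hs where "\<And>i. hs i \<in> tree limit" "\<And>i. hs (Suc i) \<in> extensions limit (hs i)"
    "\<And>i. y i \<in> last (hs (Suc i))"
proof -
  obtain grow where grow: "\<And>h i. h \<in> tree limit \<Longrightarrow>
      grow h i \<in> extensions limit h \<and> y i \<in> last (grow h i)"
    using assms by metis
  define hs where "hs = rec_nat [] (\<lambda>i h. grow h i)"
  have hs_Suc: "hs (Suc i) = grow (hs i) i" for i
    by (simp add: hs_def)
  have hs_tree: "hs i \<in> tree limit" for i
  proof (induction i)
    case 0
    then show ?case by (simp add: hs_def tree_def)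
  next
    case (Suc i)
    then show ?case
      using grow hs_Suc by (auto simp: extensions_def)
  qed
  show thesis
  proof (rule that)
    show "hs i \<in> tree limit" for i
      by (rule hs_tree)
    show "hs (Suc i) \<in> extensions limit (hs i)" "y i \<in> last (hs (Suc i))" for i
      using grow[OF hs_tree[of i]] hs_Suc by simp_all
  qed
qed

lemma branch_catching:
  assumes "countable Y" "Y \<noteq> {}" "Y \<subseteq> L"
  obtains b where "\<And>n. map b [0..<n] \<in> tree limit" "Y \<subseteq> (\<Union>n. b n)"
proof -
  define y where "y = from_nat_into Y"
  have y: "y i \<in> L" for i
    using from_nat_into[OF assms(2)] assms(3) by (auto simp: y_def)
  have "\<exists>h'\<in>extensions limit h. y i \<in> last h'" if "h \<in> tree limit" for h i
    using reachable_limit[OF that] y mem_reachable_iff[OF admissible_limit y] by blast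
  then obtain hs where hs: "\<And>i. hs i \<in> tree limit"
    "\<And>i. hs (Suc i) \<in> extensions limit (hs i)" "\<And>i. y i \<in> last (hs (Suc i))"
    using descent[of y] by blast
  obtain b where b: "\<And>i. hs i = map b [0..<length (hs i)]" "\<And>n. take n (hs n) = map b [0..<n]"
    using prefix_chain_limit[of hs] hs(2) by (auto simp: extensions_def)
  have "map b [0..<n] \<in> tree limit" for n
    using tree_take[OF hs(1)] b(2) by metis
  moreover have "Y \<subseteq> (\<Union>n. b n)"
  proof
    fix x assume "x \<in> Y"
    then obtain i where "y i = x"
      using from_nat_into_surj[OF assms(1)] by (auto simp: y_def)
    moreover have "0 < length (hs (Suc i))"
      using hs(2)[of i] by (auto simp: extensions_def)
    then have "last (hs (Suc i)) = b (length (hs (Suc i)) - 1)"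
      by (subst b(1)) (simp add: last_map last_upt)
    ultimately show "x \<in> (\<Union>n. b n)"
      using hs(3)[of i] by auto
  qed
  ultimately show thesis
    using that by blast
qed

theorem covering_play: "\<exists>U. (\<forall>n. U n \<in> \<sigma> (map U [0..<n])) \<and> (\<Union>n. U n) = L"
proof -
  let ?Y = "insert (d 0) (L - surely_covered)"
  have "countable ?Y"
    using countable_diff_surely_covered by simp
  moreover have "?Y \<subseteq> L"
    using d_mem by blast
  ultimately obtain b where branch: "\<And>n. map b [0..<n] \<in> tree limit"
    and catch: "?Y \<subseteq> (\<Union>n. b n)"
    using branch_catching[of ?Y] by (metis insert_not_empty)
  have move: "b n \<in> \<sigma> (map b [0..<n])" for n
    using tree_move[OF admissible_limit branch[of "Suc n"], of n]
    by (simp del: upt_Suc add: take_map take_upt)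
  have "L \<subseteq> (\<Union>n. b n)"
  proof
    fix x assume "x \<in> L"
    show "x \<in> (\<Union>n. b n)"
    proof (cases "x \<in> surely_covered")
      case True
      then obtain m where m:
        "\<forall>h\<in>{h \<in> tree limit. length h = m}. x \<in> (\<Union>i<m. open_lift L (h ! i))"
        unfolding surely_covered_def by blast
      then have "x \<in> (\<Union>i<m. open_lift L (map b [0..<m] ! i))"
        using bspec[OF m, of "map b [0..<m]"] branch[of m] by simp
      then obtain i where "i < m" "x \<in> open_lift L (b i)"
        by auto
      then show ?thesis
        using move_lift(2)[OF move[of i]] \<open>x \<in> L\<close> by blast
    next
      case False
      then show ?thesis
        using catch \<open>x \<in> L\<close> by blast
    qed
  qed
  moreover have "(\<Union>n. b n) \<subseteq> L"
    using move move_subset by blast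
  ultimately show ?thesis
    using move by blast
qed

end

theorem mainTheorem14:
  fixes L :: "real set"
  assumes "luzin_set L"
  shows "(\<nexists>\<sigma>. alice_winning L \<sigma>) \<and> (\<nexists>\<tau>. bob_winning L \<tau>)"
proof
  show "\<nexists>\<tau>. bob_winning L \<tau>"
    using bob_not_winning luzin_set_gap[OF assms] assms by (metis luzin_set_def)
  show "\<nexists>\<sigma>. alice_winning L \<sigma>"
  proof
    assume "\<exists>\<sigma>. alice_winning L \<sigma>"
    then obtain \<sigma> where \<sigma>: "alice_strategy L \<sigma>"
      and wins: "\<And>U. \<forall>n. U n \<in> \<sigma> (map U [0..<n]) \<Longrightarrow> (\<Union>n. U n) \<noteq> L"
      unfolding alice_winning_def by blast
    have "L \<noteq> {}"
      using assms by (auto simp: luzin_set_def)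
    then obtain d :: "nat \<Rightarrow> real" where "range d \<subseteq> L" "\<And>m. L \<subseteq> closure (d ` {m..})"
      using dense_sequence by blast
    then interpret alice_strategy_on_luzin_set L \<sigma> d
      using assms \<sigma> by unfold_locales
    show False
      using covering_play wins by blast
  qed
qed

end
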